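(* For every set $P$ of $n\ge 2$ points in the plane in general position, the graph $G_\bigtriangledown(P)$ contains a matching of size at least $\left\lceil\frac{n-2}{3}\right\rceil$.
   Context: A finite point set $P$ in the plane is in general position if no line through two points of $P$ makes an angle of $0^\circ$, $60^\circ$ or $120^\circ$ with the horizontal. A down-triangle is an equilateral triangle with one side parallel to the $x$-axis and the corner opposite to this side below that side. $G_\bigtriangledown(P)$ is the graph with vertex set $P$ in which $p,q$ are adjacent iff some (closed) down-triangle contains $p$ and $q$ and no other point of $P$. A matching is a set of pairwise vertex-disjoint edges. *)

theory Defs
  imports Complex_Main
begin

type_synonym point = "real \<times> real"

text \<open>General position: no line through two distinct points of P makes an angle of
0, 60 or 120 degrees with the horizontal axis.\<close>
definition general_position :: "point set \<Rightarrow> bool" where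
  "general_position P \<longleftrightarrow>
     (\<forall>p\<in>P. \<forall>q\<in>P. p \<noteq> q \<longrightarrow>
        snd q - snd p \<noteq> 0 \<and>
        snd q - snd p \<noteq> sqrt 3 * (fst q - fst p) \<and>
        snd q - snd p \<noteq> - sqrt 3 * (fst q - fst p))"

text \<open>The closed down-triangle whose horizontal (top) side is the segment from (a,c) to
(a+s,c), s \<ge> 0, and whose third corner (a+s/2, c - s*sqrt 3/2) lies below that side.\<close>
definition down_triangle :: "real \<Rightarrow> real \<Rightarrow> real \<Rightarrow> point set" where
  "down_triangle a c s =
     {(x, y). y \<le> c \<and> y \<ge> c - sqrt 3 * (x - a) \<and> y \<ge> c + sqrt 3 * (x - a - s)}"

definition down_adj :: "point set \<Rightarrow> point \<Rightarrow> point \<Rightarrow> bool" where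
  "down_adj P p q \<longleftrightarrow> p \<in> P \<and> q \<in> P \<and> p \<noteq> q \<and>
     (\<exists>a c s. s \<ge> 0 \<and> p \<in> down_triangle a c s \<and> q \<in> down_triangle a c s \<and>
        P \<inter> down_triangle a c s \<subseteq> {p, q})"

definition down_matching :: "point set \<Rightarrow> point set set \<Rightarrow> bool" where
  "down_matching P M \<longleftrightarrow>
     (\<forall>e\<in>M. \<exists>p q. e = {p, q} \<and> down_adj P p q) \<and>
     (\<forall>e\<in>M. \<forall>f\<in>M. e \<noteq> f \<longrightarrow> e \<inter> f = {})"

end

theory Submission
  imports Defs
begin

text \<open>
  In the coordinates diag_plus = y + sqrt 3 x and diag_minus = y - sqrt 3 x a down-triangle is a
  set {y \<le> c, diag_plus \<ge> b, diag_minus \<ge> g}. Say that x dominates v if x exceeds v in both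
  coordinates, and group the points of P by their lowest dominator (or by having none). Every
  point gets a parent: its nearest left neighbour (in diag_plus) within its group or, if it is the
  leftmost point of its group, the lowest dominator of the group. Both kinds of parent are
  neighbours in G_down(P) of larger diag_minus, so the parent map is a forest; a vertex has at most
  two children (its right neighbour in its group and the leftmost point of the group it dominates
  lowest), and the leftmost undominated point is the only root. Matching a parent of least
  diag_minus with one of its children and deleting it together with its children removes at most
  three vertices per matching edge, so n \<le> 3 |M| + 1.
\<close>

lemma arg_max_on_if_finite:
  fixes f :: "'a \<Rightarrow> 'b::linorder"
  assumes "finite S" "S \<noteq> {}"
  shows "arg_max_on f S \<in> S" and "\<forall>y\<in>S. f y \<le> f (arg_max_on f S)"
proof -
  have "Max (f ` S) \<in> f ` S"
    using assms by simp
  then obtain x where "x \<in> S" "f x = Max (f ` S)"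
    by auto
  then have "is_arg_max f (\<lambda>x. x \<in> S) x"
    using assms by (auto simp: is_arg_max_linorder)
  then have "is_arg_max f (\<lambda>x. x \<in> S) (arg_max_on f S)"
    unfolding arg_max_on_def arg_max_def by (rule someI)
  then show "arg_max_on f S \<in> S" and "\<forall>y\<in>S. f y \<le> f (arg_max_on f S)"
    by (auto simp: is_arg_max_linorder)
qed

lemma ex_parent_with_leaf_children:
  fixes par :: "'a \<Rightarrow> 'a option" and rank :: "'a \<Rightarrow> 'b::linorder"
  assumes "finite V"
    and parent: "\<And>v p. v \<in> V \<Longrightarrow> par v = Some p \<Longrightarrow> p \<in> V \<and> rank v < rank p"
    and "c \<in> V" "par c = Some q"
  obtains c p where "c \<in> V" "par c = Some p"
    and "\<And>c v. c \<in> V \<Longrightarrow> par c = Some p \<Longrightarrow> v \<in> V \<Longrightarrow> par v \<noteq> Some c"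
proof -
  define Q where "Q = {p \<in> V. \<exists>c\<in>V. par c = Some p}"
  have "finite Q"
    using \<open>finite V\<close> unfolding Q_def by simp
  moreover have "q \<in> Q"
    using assms(3,4) parent[OF assms(3,4)] unfolding Q_def by blast
  ultimately have "arg_min_on rank Q \<in> Q"
    and least: "\<And>q. q \<in> Q \<Longrightarrow> rank (arg_min_on rank Q) \<le> rank q"
    using arg_min_if_finite(1)[of Q rank] arg_min_least[of Q _ rank] by blast+
  then obtain c where c: "c \<in> V" "par c = Some (arg_min_on rank Q)"
    unfolding Q_def by blast
  have "par v \<noteq> Some c'" if "c' \<in> V" "par c' = Some (arg_min_on rank Q)" "v \<in> V" for c' v
  proof
    assume "par v = Some c'"
    then have "rank (arg_min_on rank Q) \<le> rank c'"
      using least that unfolding Q_def by blast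
    with parent[OF that(1,2)] show False
      by (meson leD)
  qed
  with c show thesis
    using that by blast
qed

lemma forest_remove_parent_and_children:
  fixes par :: "'a \<Rightarrow> 'a option" and rank :: "'a \<Rightarrow> 'b::linorder"
  assumes "finite V"
    and parent: "\<And>v p. v \<in> V \<Longrightarrow> par v = Some p \<Longrightarrow> p \<in> V \<and> rank v < rank p"
    and leaves: "\<And>c v. c \<in> V \<Longrightarrow> par c = Some p \<Longrightarrow> v \<in> V \<Longrightarrow> par v \<noteq> Some c"
    and "c \<in> V" "par c = Some p"
  defines "V' \<equiv> V - insert p {v \<in> V. par v = Some p}"
  shows "card V = card V' + Suc (card {v \<in> V. par v = Some p})"
    and "\<And>v q. v \<in> V' \<Longrightarrow> par v = Some q \<Longrightarrow> q \<in> V' \<and> rank v < rank q"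
proof -
  define C where "C = {v \<in> V. par v = Some p}"
  have "p \<in> V" "p \<notin> C" "finite C"
    using parent[OF assms(4,5)] parent[of p p] \<open>finite V\<close> unfolding C_def by auto
  then show "card V = card V' + Suc (card C)"
    using card_Diff_subset[of "insert p C" V] card_mono[OF \<open>finite V\<close>, of "insert p C"]
    unfolding V'_def C_def by auto
  fix v q
  assume "v \<in> V'" "par v = Some q"
  then have "v \<in> V" "v \<notin> C" "par v = Some q"
    unfolding V'_def C_def by auto
  then have "q \<noteq> p" "q \<notin> C" "q \<in> V" "rank v < rank q"
    using leaves[of q v] parent[of v q] unfolding C_def by auto
  then show "q \<in> V' \<and> rank v < rank q"
    unfolding V'_def C_def by simp
qed

lemma pairwise_disjnt_insert_fresh_edge:
  assumes "pairwise disjnt M" "\<And>e. e \<in> M \<Longrightarrow> e \<subseteq> V" "c \<notin> V" "p \<notin> V" "finite M"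
  shows "pairwise disjnt (insert {c, p} M)" "card (insert {c, p} M) = Suc (card M)"
proof -
  have "{c, p} \<notin> M" "\<forall>e\<in>M. disjnt {c, p} e"
    using assms(2-4) unfolding disjnt_def by blast+
  then show "pairwise disjnt (insert {c, p} M)" "card (insert {c, p} M) = Suc (card M)"
    using assms(1,5) by (auto simp: pairwise_insert disjnt_sym)
qed

lemma forest_matching_card:
  fixes par :: "'a \<Rightarrow> 'a option" and rank :: "'a \<Rightarrow> 'b::linorder"
  assumes "finite V"
    and "\<And>v p. v \<in> V \<Longrightarrow> par v = Some p \<Longrightarrow> p \<in> V \<and> rank v < rank p"
    and "\<And>p. p \<in> V \<Longrightarrow> card {v \<in> V. par v = Some p} \<le> k"
  shows "\<exists>M. (\<forall>e\<in>M. \<exists>v p. e = {v, p} \<and> v \<in> V \<and> par v = Some p) \<and> pairwise disjnt M \<and>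
             finite M \<and> card V \<le> Suc k * card M + card {v \<in> V. par v = None}"
  using assms
proof (induction "card V" arbitrary: V rule: less_induct)
  case less
  note fin = less.prems(1) and parent = less.prems(2) and children = less.prems(3)
  show ?case
  proof (cases "\<exists>c\<in>V. par c \<noteq> None")
    case False
    then have "{v \<in> V. par v = None} = V" by auto
    then show ?thesis by (intro exI[of _ "{}"]) auto
  next
    case True
    \<comment> \<open>The children of a parent of least rank are leaves; match one of them with the parent and
      delete the parent together with all its children.\<close>
    then obtain c0 q where "c0 \<in> V" "par c0 = Some q"
      by blast
    then obtain c p where c: "c \<in> V" "par c = Some p"
      and leaves: "\<And>c v. c \<in> V \<Longrightarrow> par c = Some p \<Longrightarrow> v \<in> V \<Longrightarrow> par v \<noteq> Some c"
      using ex_parent_with_leaf_children[OF fin parent] by blast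
    define C where "C = {v \<in> V. par v = Some p}"
    define V' where "V' = V - insert p C"
    have "p \<in> V" "c \<in> C"
      using parent[OF c] c unfolding C_def by auto
    have card_V: "card V = card V' + Suc (card C)"
      and closed: "\<And>v q. v \<in> V' \<Longrightarrow> par v = Some q \<Longrightarrow> q \<in> V' \<and> rank v < rank q"
      using forest_remove_parent_and_children[where par = par and rank = rank, OF fin parent leaves c]
      unfolding V'_def C_def by blast+
    have "card {v \<in> V'. par v = Some q} \<le> k" if "q \<in> V'" for q
    proof -
      have "card {v \<in> V'. par v = Some q} \<le> card {v \<in> V. par v = Some q}"
        using fin unfolding V'_def by (intro card_mono) auto
      also have "\<dots> \<le> k"
        using children that unfolding V'_def by blast
      finally show ?thesis .
    qed
    moreover have "card V' < card V" "finite V'"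
      using card_V fin unfolding V'_def by auto
    ultimately obtain M' where M'_edges: "\<forall>e\<in>M'. \<exists>v q. e = {v, q} \<and> v \<in> V' \<and> par v = Some q"
      and "pairwise disjnt M'" "finite M'"
      and card_V': "card V' \<le> Suc k * card M' + card {v \<in> V'. par v = None}"
      using less.hyps[of V'] closed by blast
    have M'_sub: "e \<subseteq> V'" if e: "e \<in> M'" for e
    proof -
      obtain v q where "e = {v, q}" "v \<in> V'" "par v = Some q"
        using M'_edges e by blast
      then show ?thesis
        using closed by simp
    qed
    have "c \<notin> V'" "p \<notin> V'"
      using \<open>c \<in> C\<close> unfolding V'_def by auto
    note M = pairwise_disjnt_insert_fresh_edge[OF \<open>pairwise disjnt M'\<close> M'_sub this \<open>finite M'\<close>]
    have "card {v \<in> V'. par v = None} \<le> card {v \<in> V. par v = None}"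
      using fin unfolding V'_def by (intro card_mono) auto
    moreover have "card C \<le> k"
      using children[OF \<open>p \<in> V\<close>] unfolding C_def .
    ultimately have "card V \<le> Suc k * card (insert {c, p} M') + card {v \<in> V. par v = None}"
      using card_V card_V' M(2) by simp
    moreover have "\<forall>e\<in>insert {c, p} M'. \<exists>v q. e = {v, q} \<and> v \<in> V \<and> par v = Some q"
      using M'_edges c unfolding V'_def by blast
    ultimately show ?thesis
      using M(1) \<open>finite M'\<close> by blast
  qed
qed

definition diag_plus :: "point \<Rightarrow> real" where
  "diag_plus z = snd z + sqrt 3 * fst z"

definition diag_minus :: "point \<Rightarrow> real" where
  "diag_minus z = snd z - sqrt 3 * fst z"

lemma diag_plus_add_diag_minus: "diag_plus z + diag_minus z = 2 * snd z"
  unfolding diag_plus_def diag_minus_def by simp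

lemma mem_down_triangle_iff:
  "z \<in> down_triangle a c s \<longleftrightarrow>
     snd z \<le> c \<and> c + sqrt 3 * a \<le> diag_plus z \<and> c - sqrt 3 * (a + s) \<le> diag_minus z"
  by (cases z) (auto simp: down_triangle_def diag_plus_def diag_minus_def algebra_simps)

lemma down_adj_if_alone_in_span:
  assumes "p \<in> P" "q \<in> P" "p \<noteq> q"
    and alone: "\<And>z. z \<in> P \<Longrightarrow> snd z \<le> max (snd p) (snd q) \<Longrightarrow>
      min (diag_plus p) (diag_plus q) \<le> diag_plus z \<Longrightarrow>
      min (diag_minus p) (diag_minus q) \<le> diag_minus z \<Longrightarrow> z = p \<or> z = q"
  shows "down_adj P p q"
proof -
  define c where "c = max (snd p) (snd q)"
  define \<beta> where "\<beta> = min (diag_plus p) (diag_plus q)"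
  define \<gamma> where "\<gamma> = min (diag_minus p) (diag_minus q)"
  define T where "T = down_triangle ((\<beta> - c) / sqrt 3) c ((2 * c - \<beta> - \<gamma>) / sqrt 3)"
  have mem_T: "z \<in> T \<longleftrightarrow> snd z \<le> c \<and> \<beta> \<le> diag_plus z \<and> \<gamma> \<le> diag_minus z" for z
    unfolding T_def mem_down_triangle_iff distrib_left by simp
  have "\<beta> + \<gamma> \<le> 2 * c"
    using diag_plus_add_diag_minus[of p] unfolding \<beta>_def \<gamma>_def c_def by linarith
  then have "(2 * c - \<beta> - \<gamma>) / sqrt 3 \<ge> 0"
    by simp
  moreover have "p \<in> T" "q \<in> T"
    unfolding mem_T c_def \<beta>_def \<gamma>_def by auto
  moreover have "P \<inter> T \<subseteq> {p, q}"
  proof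
    fix z
    assume "z \<in> P \<inter> T"
    then show "z \<in> {p, q}"
      using alone[of z] unfolding Int_iff mem_T c_def \<beta>_def \<gamma>_def by blast
  qed
  ultimately show ?thesis
    unfolding down_adj_def T_def using assms(1-3) by blast
qed

lemma down_adj_commute: "down_adj P p q \<longleftrightarrow> down_adj P q p"
  unfolding down_adj_def by (auto simp: insert_commute)

lemma general_position_inj_on:
  assumes "general_position P"
  shows "inj_on snd P" "inj_on diag_plus P" "inj_on diag_minus P"
proof -
  have neq: "snd q - snd p \<noteq> 0" "snd q - snd p \<noteq> sqrt 3 * (fst q - fst p)"
    "snd q - snd p \<noteq> - sqrt 3 * (fst q - fst p)" if "p \<in> P" "q \<in> P" "p \<noteq> q" for p q
    using assms that unfolding general_position_def by auto
  show "inj_on snd P"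
    using neq(1) by (fastforce intro: inj_onI)
  show "inj_on diag_plus P"
    using neq(3) by (fastforce intro: inj_onI simp: diag_plus_def algebra_simps)
  show "inj_on diag_minus P"
    using neq(2) by (fastforce intro: inj_onI simp: diag_minus_def algebra_simps)
qed

definition dominates :: "point \<Rightarrow> point \<Rightarrow> bool" where
  "dominates x v \<longleftrightarrow> diag_plus v < diag_plus x \<and> diag_minus v < diag_minus x"

lemma dominates_imp_snd_less: "dominates x v \<Longrightarrow> snd v < snd x"
  using diag_plus_add_diag_minus[of x] diag_plus_add_diag_minus[of v]
  unfolding dominates_def by linarith

definition dominators :: "point set \<Rightarrow> point \<Rightarrow> point set" where
  "dominators P v = {x \<in> P. dominates x v}"

definition lowest_dominator :: "point set \<Rightarrow> point \<Rightarrow> point option" where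
  "lowest_dominator P v =
     (if dominators P v = {} then None else Some (arg_min_on snd (dominators P v)))"

definition below :: "point option \<Rightarrow> point \<Rightarrow> bool" where
  "below K z \<longleftrightarrow> (case K of None \<Rightarrow> True | Some x \<Rightarrow> snd z < snd x)"

definition left_siblings :: "point set \<Rightarrow> point \<Rightarrow> point set" where
  "left_siblings P v =
     {s \<in> P. lowest_dominator P s = lowest_dominator P v \<and> diag_plus s < diag_plus v}"

definition parent :: "point set \<Rightarrow> point \<Rightarrow> point option" where
  "parent P v =
     (if left_siblings P v = {} then lowest_dominator P v
      else Some (arg_max_on diag_plus (left_siblings P v)))"

lemma lowest_dominator_eq_None_iff: "lowest_dominator P v = None \<longleftrightarrow> dominators P v = {}"
  unfolding lowest_dominator_def by simp

context
  fixes P :: "point set"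
  assumes finite_P: "finite P"
begin

lemma lowest_dominatorD:
  assumes "lowest_dominator P v = Some x"
  shows "x \<in> dominators P v" "\<And>u. u \<in> dominators P v \<Longrightarrow> snd x \<le> snd u"
proof -
  have "dominators P v \<noteq> {}" "finite (dominators P v)"
    using assms finite_P unfolding lowest_dominator_def dominators_def by (auto split: if_splits)
  moreover have "x = arg_min_on snd (dominators P v)"
    using assms unfolding lowest_dominator_def by (auto split: if_splits)
  ultimately show "x \<in> dominators P v" "\<And>u. u \<in> dominators P v \<Longrightarrow> snd x \<le> snd u"
    using arg_min_if_finite(1) arg_min_least by simp_all
qed

lemma below_lowest_dominator: "below (lowest_dominator P v) v"
  using lowest_dominatorD(1) dominates_imp_snd_less
  unfolding below_def dominators_def by (auto split: option.split)

lemma not_below_lowest_dominator: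
  assumes "u \<in> dominators P v"
  shows "\<not> below (lowest_dominator P v) u"
  using assms lowest_dominatorD(2)[of v _ u] lowest_dominator_eq_None_iff[of P v]
  unfolding below_def by (auto split: option.split)

lemma ex_topmost_weak_dominator_below:
  assumes "z \<in> P" "below K z"
  obtains w where "w \<in> P" "diag_plus z \<le> diag_plus w" "diag_minus z \<le> diag_minus w"
    "below K w" "\<And>u. u \<in> dominators P w \<Longrightarrow> \<not> below K u"
proof -
  define W where "W = {w \<in> P. diag_plus z \<le> diag_plus w \<and> diag_minus z \<le> diag_minus w \<and> below K w}"
  define w where "w = arg_max_on snd W"
  have "finite W" "z \<in> W"
    using finite_P assms unfolding W_def by auto
  then have "w \<in> W" and top: "\<And>u. u \<in> W \<Longrightarrow> snd u \<le> snd w"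
    using arg_max_on_if_finite[of W snd] unfolding w_def by auto
  moreover have "\<not> below K u" if "u \<in> dominators P w" for u
  proof
    assume "below K u"
    with that \<open>w \<in> W\<close> have "u \<in> W"
      unfolding W_def dominators_def dominates_def by auto
    with top[of u] dominates_imp_snd_less[of u w] that show False
      unfolding dominators_def by simp
  qed
  ultimately show thesis
    using that unfolding W_def by blast
qed

context
  assumes general_position_P: "general_position P"
begin

lemma lowest_dominator_eqI:
  assumes "below K w" "\<And>u. u \<in> dominators P w \<Longrightarrow> \<not> below K u"
    and "\<And>x. K = Some x \<Longrightarrow> x \<in> dominators P w"
  shows "lowest_dominator P w = K"
proof (cases K)
  case None
  then show ?thesis
    using assms(2) lowest_dominator_eq_None_iff[of P w] unfolding below_def by auto
next
  case (Some x)
  have x: "x \<in> dominators P w"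
    using assms(3) Some by simp
  have x_lowest: "snd x \<le> snd u" if "u \<in> dominators P w" for u
    using assms(2)[OF that] Some unfolding below_def by simp
  obtain y where y: "lowest_dominator P w = Some y"
    using x lowest_dominator_eq_None_iff[of P w] by fastforce
  have "snd y = snd x"
    using x x_lowest lowest_dominatorD[OF y] by (meson order_antisym)
  then have "y = x"
    using x(1) lowest_dominatorD(1)[OF y] general_position_inj_on(1)[OF general_position_P]
    unfolding dominators_def by (auto dest: inj_onD)
  then show ?thesis
    using y Some by simp
qed

lemma down_adj_lowest_dominator:
  assumes "v \<in> P" "lowest_dominator P v = Some x"
  shows "down_adj P v x"
proof -
  have x: "x \<in> P" "dominates x v" "\<And>u. u \<in> dominators P v \<Longrightarrow> snd x \<le> snd u"
    using lowest_dominatorD[OF assms(2)] unfolding dominators_def by auto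
  show ?thesis
  proof (rule down_adj_if_alone_in_span[OF assms(1) x(1)])
    show "v \<noteq> x"
      using x(2) unfolding dominates_def by auto
    fix z
    assume z: "z \<in> P" "snd z \<le> max (snd v) (snd x)"
      "min (diag_plus v) (diag_plus x) \<le> diag_plus z" "min (diag_minus v) (diag_minus x) \<le> diag_minus z"
    show "z = v \<or> z = x"
    proof (cases "z = v")
      case False
      then have "dominates z v"
        using z x(2) general_position_inj_on(2,3)[OF general_position_P] assms(1)
        unfolding dominates_def inj_on_def by force
      then have "snd z = snd x"
        using x(3)[of z] z(1,2) dominates_imp_snd_less[OF x(2)] unfolding dominators_def by auto
      then show ?thesis
        using z(1) x(1) general_position_inj_on(1)[OF general_position_P] by (auto dest: inj_onD)
    qed simp
  qed
qed

lemma diag_minus_less_left_sibling: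
  assumes "v \<in> P" "s \<in> left_siblings P v"
  shows "diag_minus v < diag_minus s"
proof (rule ccontr)
  assume "\<not> diag_minus v < diag_minus s"
  moreover have "s \<in> P" "diag_plus s < diag_plus v"
    and same: "lowest_dominator P s = lowest_dominator P v"
    using assms(2) unfolding left_siblings_def by auto
  ultimately have "v \<in> dominators P s"
    using assms(1) general_position_inj_on(3)[OF general_position_P]
    unfolding dominators_def dominates_def inj_on_def by force
  then show False
    using not_below_lowest_dominator below_lowest_dominator[of v] same by metis
qed

lemma weak_dominator_eq_nearest_left_sibling_or_self:
  assumes "v \<in> P" "s \<in> left_siblings P v"
    and nearest: "\<And>t. t \<in> left_siblings P v \<Longrightarrow> diag_plus t \<le> diag_plus s"
    and "w \<in> P" "diag_plus s \<le> diag_plus w" "diag_minus v \<le> diag_minus w"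
    and below_w: "below (lowest_dominator P v) w"
    and top_w: "\<And>u. u \<in> dominators P w \<Longrightarrow> \<not> below (lowest_dominator P v) u"
  shows "w = s \<or> w = v"
proof -
  have inj: "inj_on diag_plus P" "inj_on diag_minus P"
    using general_position_inj_on[OF general_position_P] by auto
  have s: "s \<in> P" "diag_plus s < diag_plus v" "lowest_dominator P s = lowest_dominator P v"
    using assms(2) unfolding left_siblings_def by auto
  have "w \<notin> dominators P v"
    using not_below_lowest_dominator below_w by blast
  then have "diag_plus w \<le> diag_plus v"
    using assms(1,4,6) inj(2) unfolding dominators_def dominates_def inj_on_def by force
  have "w \<notin> dominators P s"
    using not_below_lowest_dominator below_w s(3) by metis
  then have "diag_minus w \<le> diag_minus s"
    using assms(4,5) s(1) inj(1) unfolding dominators_def dominates_def inj_on_def by force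
  have "lowest_dominator P w = lowest_dominator P v"
  proof (rule lowest_dominator_eqI[OF below_w top_w])
    fix x
    assume "lowest_dominator P v = Some x"
    then have "dominates x v" "dominates x s" "x \<in> P"
      using lowest_dominatorD(1)[of v x] lowest_dominatorD(1)[of s x] s(3)
      unfolding dominators_def by auto
    then show "x \<in> dominators P w"
      using \<open>diag_plus w \<le> diag_plus v\<close> \<open>diag_minus w \<le> diag_minus s\<close>
      unfolding dominators_def dominates_def by auto
  qed
  show "w = s \<or> w = v"
  proof (rule ccontr)
    assume "\<not> (w = s \<or> w = v)"
    then have "diag_plus s < diag_plus w" "diag_plus w < diag_plus v"
      using assms(5) \<open>diag_plus w \<le> diag_plus v\<close> s(1) assms(1,4) inj(1)
      unfolding inj_on_def by (auto simp: order.order_iff_strict)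
    with \<open>lowest_dominator P w = lowest_dominator P v\<close> have "w \<in> left_siblings P v"
      using assms(4) unfolding left_siblings_def by simp
    with nearest \<open>diag_plus s < diag_plus w\<close> show False
      by fastforce
  qed
qed

lemma down_adj_nearest_left_sibling:
  assumes "v \<in> P" "s \<in> left_siblings P v"
    and nearest: "\<And>t. t \<in> left_siblings P v \<Longrightarrow> diag_plus t \<le> diag_plus s"
  shows "down_adj P s v"
proof -
  define K where "K = lowest_dominator P v"
  have s: "s \<in> P" "diag_plus s < diag_plus v" "lowest_dominator P s = K"
    using assms(2) unfolding left_siblings_def K_def by auto
  have "diag_minus v < diag_minus s"
    using diag_minus_less_left_sibling[OF assms(1,2)] .
  show ?thesis
  proof (rule down_adj_if_alone_in_span[OF s(1) assms(1)])
    show "s \<noteq> v"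
      using s(2) by auto
    fix z
    assume z: "z \<in> P" "snd z \<le> max (snd s) (snd v)"
      "min (diag_plus s) (diag_plus v) \<le> diag_plus z" "min (diag_minus s) (diag_minus v) \<le> diag_minus z"
    \<comment> \<open>A topmost point w below K that weakly dominates z has lowest dominator K and lies between
      s and v in diag_plus, hence is s or v; this pins down z.\<close>
    have "below K z"
      using below_lowest_dominator[of v] below_lowest_dominator[of s] z(2) s(3)
      unfolding K_def below_def by (auto split: option.splits)
    then obtain w where w: "w \<in> P" "diag_plus z \<le> diag_plus w" "diag_minus z \<le> diag_minus w"
      "below K w" "\<And>u. u \<in> dominators P w \<Longrightarrow> \<not> below K u"
      using ex_topmost_weak_dominator_below[OF z(1)] by blast
    have "w = s \<or> w = v"
      using weak_dominator_eq_nearest_left_sibling_or_self[OF assms w(1)] w z(3,4) s(2)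
        \<open>diag_minus v < diag_minus s\<close> unfolding K_def by auto
    then show "z = s \<or> z = v"
      using w(2,3) z(1,3,4) s(1,2) assms(1) \<open>diag_minus v < diag_minus s\<close>
        general_position_inj_on(2,3)[OF general_position_P]
      unfolding inj_on_def by force
  qed
qed

lemma parent_cases:
  assumes "parent P v = Some p"
  obtains "p \<in> left_siblings P v" "\<And>t. t \<in> left_siblings P v \<Longrightarrow> diag_plus t \<le> diag_plus p"
  | "left_siblings P v = {}" "lowest_dominator P v = Some p"
proof (cases "left_siblings P v = {}")
  case False
  moreover have "finite (left_siblings P v)"
    using finite_P unfolding left_siblings_def by simp
  moreover have "p = arg_max_on diag_plus (left_siblings P v)"
    using assms False unfolding parent_def by simp
  ultimately show thesis
    using that(1) arg_max_on_if_finite by blast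
qed (use assms that(2) in \<open>simp add: parent_def\<close>)

lemma parent_edge:
  assumes "v \<in> P" "parent P v = Some p"
  shows "p \<in> P" "diag_minus v < diag_minus p" "down_adj P v p"
proof -
  from assms(2) have "p \<in> P \<and> diag_minus v < diag_minus p \<and> down_adj P v p"
  proof (cases rule: parent_cases)
    case 1
    then show ?thesis
      using diag_minus_less_left_sibling[OF assms(1)] down_adj_nearest_left_sibling[OF assms(1)]
        down_adj_commute unfolding left_siblings_def by blast
  next
    case 2
    then show ?thesis
      using lowest_dominatorD(1) down_adj_lowest_dominator[OF assms(1)]
      unfolding dominators_def dominates_def by blast
  qed
  then show "p \<in> P" "diag_minus v < diag_minus p" "down_adj P v p"
    by auto
qed

lemma card_le_1_if_no_diag_plus_less:
  assumes "A \<subseteq> P" "\<And>x y. x \<in> A \<Longrightarrow> y \<in> A \<Longrightarrow> diag_plus x < diag_plus y \<Longrightarrow> False"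
  shows "card A \<le> 1"
proof -
  have "x = y" if "x \<in> A" "y \<in> A" for x y
  proof (rule ccontr)
    assume "x \<noteq> y"
    then have "diag_plus x \<noteq> diag_plus y"
      using that assms(1) general_position_inj_on(2)[OF general_position_P]
      unfolding inj_on_def by blast
    then show False
      using assms(2)[OF that] assms(2)[OF that(2,1)] by (meson linorder_neqE)
  qed
  then show ?thesis
    using card_le_Suc0_iff_eq[of A] finite_subset[OF assms(1) finite_P] by auto
qed

lemma card_children_le_2: "card {v \<in> P. parent P v = Some p} \<le> 2"
proof -
  define A where "A = {v \<in> P. p \<in> left_siblings P v \<and> (\<forall>t\<in>left_siblings P v. diag_plus t \<le> diag_plus p)}"
  define B where "B = {v \<in> P. left_siblings P v = {} \<and> lowest_dominator P v = Some p}"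
  have "{v \<in> P. parent P v = Some p} \<subseteq> A \<union> B"
  proof
    fix v
    assume v: "v \<in> {v \<in> P. parent P v = Some p}"
    then have "parent P v = Some p"
      by simp
    then show "v \<in> A \<union> B"
      by (cases rule: parent_cases) (use v in \<open>auto simp: A_def B_def\<close>)
  qed
  then have "card {v \<in> P. parent P v = Some p} \<le> card (A \<union> B)"
    using finite_P by (intro card_mono) (auto simp: A_def B_def)
  also have "\<dots> \<le> card A + card B"
    by (rule card_Un_le)
  also have "card A \<le> 1"
  proof (rule card_le_1_if_no_diag_plus_less)
    fix x y
    assume "x \<in> A" "y \<in> A" "diag_plus x < diag_plus y"
    then have "x \<in> left_siblings P y" "diag_plus p < diag_plus x"
      unfolding A_def left_siblings_def by auto
    with \<open>y \<in> A\<close> show False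
      unfolding A_def by fastforce
  qed (auto simp: A_def)
  also have "card B \<le> 1"
  proof (rule card_le_1_if_no_diag_plus_less)
    fix x y
    assume "x \<in> B" "y \<in> B" "diag_plus x < diag_plus y"
    then have "x \<in> left_siblings P y"
      unfolding B_def left_siblings_def by auto
    with \<open>y \<in> B\<close> show False
      unfolding B_def by blast
  qed (auto simp: B_def)
  finally show ?thesis
    by simp
qed

lemma card_roots_le_1: "card {v \<in> P. parent P v = None} \<le> 1"
proof (rule card_le_1_if_no_diag_plus_less)
  fix x y
  assume "x \<in> {v \<in> P. parent P v = None}" "y \<in> {v \<in> P. parent P v = None}"
    "diag_plus x < diag_plus y"
  then have "x \<in> left_siblings P y" "left_siblings P y = {}"
    unfolding parent_def left_siblings_def by (auto split: if_splits)
  then show False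
    by blast
qed auto

lemma ex_down_matching_card: "\<exists>M. down_matching P M \<and> finite M \<and> card P \<le> 3 * card M + 1"
proof -
  obtain M where edges: "\<forall>e\<in>M. \<exists>v p. e = {v, p} \<and> v \<in> P \<and> parent P v = Some p"
    and "pairwise disjnt M" "finite M"
    and card_P: "card P \<le> Suc 2 * card M + card {v \<in> P. parent P v = None}"
    using forest_matching_card[OF finite_P, of "parent P" diag_minus 2] parent_edge(1,2)
      card_children_le_2 by blast
  have "down_matching P M"
    unfolding down_matching_def
  proof (intro conjI ballI impI)
    fix e
    assume "e \<in> M"
    then obtain v p where "e = {v, p}" "v \<in> P" "parent P v = Some p"
      using edges by blast
    then show "\<exists>v p. e = {v, p} \<and> down_adj P v p"
      using parent_edge(3) by blast
  next
    fix e f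
    assume "e \<in> M" "f \<in> M" "e \<noteq> f"
    then show "e \<inter> f = {}"
      using \<open>pairwise disjnt M\<close> unfolding pairwise_def disjnt_def by blast
  qed
  then show ?thesis
    using \<open>finite M\<close> card_P card_roots_le_1 by fastforce
qed

end

end

theorem theorem2:
  fixes P :: "point set" and n :: nat
  assumes "finite P" and "card P = n" and "n \<ge> 2" and "general_position P"
  shows "\<exists>M. down_matching P M \<and> finite M \<and>
           real (card M) \<ge> of_int \<lceil>(real n - 2) / 3\<rceil>"
proof -
  obtain M where M: "down_matching P M" "finite M" "n \<le> 3 * card M + 1"
    using ex_down_matching_card[OF assms(1,4)] assms(2) by blast
  then have "real n \<le> 3 * real (card M) + 1"
    by linarith
  then have "(real n - 2) / 3 \<le> real (card M)"
    by simp
  then have "of_int \<lceil>(real n - 2) / 3\<rceil> \<le> real (card M)"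
    by (metis ceiling_le_iff of_int_of_nat_eq of_int_le_iff)
  with M show ?thesis
    by blast
qed

end
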